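(* Let $\pi_1,\dots,\pi_m$ be permutations and $t_1,\dots,t_m$ reals such that $\sum_{i\in[m]}t_iP_{\pi_i}=0$, and let $k=\max\{|\pi_1|,\dots,|\pi_m|\}$. Suppose that $\pi_1,\dots,\pi_n$ are exactly those among $\pi_1,\dots,\pi_m$ that have order $k$. Let $h$ be an integer with $2\le h\le k$ such that each of the remaining permutations $\pi_{n+1},\dots,\pi_m$ has order at most $h-1$. Let $\omega=t_1\pi_1+\dots+t_n\pi_n$. Then $$\mathrm{Cov}(\omega)\,\mathbf{b}_h=(0,\dots,0)^T\quad\text{and}\quad \mathbf{b}_h^T\,\mathrm{Cov}(\omega)=(0,\dots,0).$$
   Context: A $k$-permutation is a bijection of $[k]=\{1,\dots,k\}$; $|\pi|$ denotes the order. The gradient polynomial of a $k$-permutation $\pi$ is $P_\pi(\alpha,\beta)=k!\sum_{m\in[k]}\left(\frac{k-m}{1-\alpha}-\frac{m-1}{\alpha}\right)\left(\frac{k-\pi(m)}{1-\beta}-\frac{\pi(m)-1}{\beta}\right)\frac{\alpha^{m-1}(1-\alpha)^{k-m}\beta^{\pi(m)-1}(1-\beta)^{k-\pi(m)}}{(m-1)!(k-m)!(\pi(m)-1)!(k-\pi(m))!}$. The permutation matrix $A_\pi\in\mathbb{R}^{k\times k}$ has $(A_\pi)_{i,j}=1$ if $\pi(i)=j$ and $0$ otherwise. For a formal real linear combination $\omega=\sum_i t_i\pi_i$ of $k$-permutations, its cover matrix is $\mathrm{Cov}(\omega)=\sum_i t_iA_{\pi_i}\in\mathbb{R}^{k\times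 k}$. For $a\in[k]$, $\mathbf{b}_a=\mathbf{b}^k_a\in\mathbb{R}^k$ is the column vector with $(\mathbf{b}_a)_\ell=(-1)^{\ell-1}\binom{a-1}{\ell-1}$ for $1\le\ell\le a$ and $0$ for $\ell>a$. *)

theory Defs
  imports "HOL-Analysis.Analysis"
begin

text \<open>A k-permutation is a bijection of [k] = {1..k}; we represent it by its order k
  together with a function f :: nat \<Rightarrow> nat that is a bijection of {1..k}.\<close>

definition is_kperm :: "nat \<Rightarrow> (nat \<Rightarrow> nat) \<Rightarrow> bool" where
  "is_kperm k f \<longleftrightarrow> bij_betw f {1..k} {1..k}"

definition grad_poly :: "nat \<Rightarrow> (nat \<Rightarrow> nat) \<Rightarrow> real \<Rightarrow> real \<Rightarrow> real" where
  "grad_poly k f a b = fact k * (\<Sum>m\<in>{1..k}.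
      ((real (k - m)) / (1 - a) - (real (m - 1)) / a) *
      ((real (k - f m)) / (1 - b) - (real (f m - 1)) / b) *
      (a ^ (m - 1) * (1 - a) ^ (k - m) * b ^ (f m - 1) * (1 - b) ^ (k - f m)) /
      (fact (m - 1) * fact (k - m) * fact (f m - 1) * fact (k - f m)))"

definition perm_mat :: "(nat \<Rightarrow> nat) \<Rightarrow> nat \<Rightarrow> nat \<Rightarrow> real" where
  "perm_mat f i j = (if f i = j then 1 else 0)"

text \<open>Cover matrix of omega = sum of t_i pi_i over i in I (all pi_i of the same order).\<close>

definition cover :: "nat set \<Rightarrow> (nat \<Rightarrow> real) \<Rightarrow> (nat \<Rightarrow> nat \<Rightarrow> nat) \<Rightarrow> nat \<Rightarrow> nat \<Rightarrow> real" where
  "cover I t p i j = (\<Sum>l\<in>I. t l * perm_mat (p l) i j)"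

definition bvec :: "nat \<Rightarrow> nat \<Rightarrow> real" where
  "bvec a l = (if 1 \<le> l \<and> l \<le> a then (-1) ^ (l - 1) * real ((a - 1) choose (l - 1)) else 0)"

end

(*
  Write B_{k,j} = x^(j-1) (1-x)^(k-j) / ((j-1)! (k-j)!) and D_{k,j} = -B_{k,j}'. Then
  P_pi(a, b) = k! * sum_r D_{k,r}(a) D_{k,pi(r)}(b). Fix a and compare the coefficients of b^(h-2)
  in the vanishing combination: permutations of order below h contribute nothing (deg D_{k,j} = k-2),
  while for order k the coefficient of b^(h-2) in D_{k,j} is a fixed nonzero multiple of (b_h)_j.
  Hence sum_r v_r D_{k,r} = 0 for v = Cov(omega) b_h, i.e. sum_r v_r B_{k,r} is constant. Since the
  B_{k,r} are linearly independent and (k-1)! sum_r B_{k,r} = 1, the vector v is constant; its entries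
  add up to (t_1 + ... + t_n) times an alternating sum of binomial coefficients, which is 0, so v = 0.
  Exchanging a and b replaces every permutation by its inverse and Cov(omega) by its transpose,
  which gives b_h^T Cov(omega) = 0.
*)

theory Submission
  imports Defs "HOL-Computational_Algebra.Polynomial"
begin

lemma poly_eq_0_cofinite:
  fixes p :: "'a::{idom,ring_char_0} poly"
  assumes "finite F" and "\<And>x. x \<notin> F \<Longrightarrow> poly p x = 0"
  shows "p = 0"
proof (rule ccontr)
  assume "p \<noteq> 0"
  then have "finite (F \<union> {x. poly p x = 0})"
    using assms(1) poly_roots_finite by blast
  moreover have "F \<union> {x. poly p x = 0} = UNIV"
    using assms(2) by auto
  ultimately show False
    using infinite_UNIV_char_0[where 'a='a] by simp
qed

lemma coeff_one_minus_X_power: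
  "coeff ([:1, -1:] ^ N :: 'a::comm_ring_1 poly) i = (-1) ^ i * of_nat (N choose i)"
proof (cases "i \<le> N")
  case True
  then show ?thesis
    by (simp add: coeff_linear_poly_power)
next
  case False
  then have "coeff ([:1, -1:] ^ N :: 'a poly) i = 0"
    by (intro coeff_eq_0 le_less_trans[OF degree_power_le]) simp
  with False show ?thesis
    by (simp add: binomial_eq_0)
qed

text \<open>\<open>fact (k - 1)\<close> times \<open>bernstein_basis k j\<close> is the Bernstein polynomial of degree
  \<open>k - 1\<close> with index \<open>j - 1\<close>; the normalisation is the one occurring in \<open>grad_poly\<close>.\<close>

definition bernstein_basis :: "nat \<Rightarrow> nat \<Rightarrow> real poly" where
  "bernstein_basis k j =
     smult (1 / (fact (j - 1) * fact (k - j))) (monom 1 (j - 1) * [:1, -1:] ^ (k - j))"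

definition bernstein_grad :: "nat \<Rightarrow> nat \<Rightarrow> real poly" where
  "bernstein_grad k j = - pderiv (bernstein_basis k j)"

lemma coeff_bernstein_basis:
  "coeff (bernstein_basis k j) s =
     (if s < j - 1 then 0 else (-1) ^ (s - (j - 1)) * real ((k - j) choose (s - (j - 1))))
       / (fact (j - 1) * fact (k - j))"
  by (simp add: bernstein_basis_def coeff_monom_mult coeff_one_minus_X_power)

lemma coeff_bernstein_grad:
  "coeff (bernstein_grad k j) s = - real (Suc s) * coeff (bernstein_basis k j) (Suc s)"
  by (simp add: bernstein_grad_def coeff_pderiv algebra_simps)

lemma poly_bernstein_grad:
  fixes x :: real
  assumes "x \<noteq> 0" "x \<noteq> 1" "1 \<le> j" "j \<le> k"
  shows "poly (bernstein_grad k j) x =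
    (real (k - j) / (1 - x) - real (j - 1) / x) * (x ^ (j - 1) * (1 - x) ^ (k - j))
      / (fact (j - 1) * fact (k - j))"
proof -
  let ?B = "monom 1 (j - 1) * [:1, -1:] ^ (k - j) :: real poly"
  let ?c = "real (k - j) / (1 - x) - real (j - 1) / x"
  let ?m = "x ^ (j - 1) * (1 - x) ^ (k - j)"
  have "poly (pderiv ?B) x =
      real (j - 1) * x ^ (j - 1 - 1) * (1 - x) ^ (k - j) - real (k - j) * x ^ (j - 1) * (1 - x) ^ (k - j - 1)"
    by (simp add: pderiv_mult pderiv_power pderiv_monom poly_monom pderiv_pCons algebra_simps)
  also have "\<dots> = - ?c * ?m"
    using assms by (cases "j - 1"; cases "k - j") (auto simp: field_simps)
  finally have "poly (pderiv ?B) x = - ?c * ?m" .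
  moreover have "poly (bernstein_grad k j) x = - poly (pderiv ?B) x / (fact (j - 1) * fact (k - j))"
    by (simp add: bernstein_grad_def bernstein_basis_def pderiv_smult)
  ultimately show ?thesis
    by (metis minus_diff_eq mult_minus_left)
qed

lemma coeff_bernstein_grad_eq_0:
  assumes "2 \<le> h" "1 \<le> j" "j \<le> k" "k < h"
  shows "coeff (bernstein_grad k j) (h - 2) = 0"
proof -
  have "Suc (h - 2) = h - 1" and "(k - j) choose (h - 1 - (j - 1)) = 0"
    using assms by simp_all
  then show ?thesis
    by (simp add: coeff_bernstein_grad coeff_bernstein_basis)
qed

lemma coeff_bernstein_grad_eq_bvec:
  assumes "2 \<le> h" "h \<le> k" "1 \<le> j"
  shows "coeff (bernstein_grad k j) (h - 2) = (-1) ^ h / (fact (h - 2) * fact (k - h)) * bvec h j"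
proof (cases "j \<le> h")
  case False
  then show ?thesis
    using assms by (simp add: coeff_bernstein_grad coeff_bernstein_basis bvec_def)
next
  case True
  obtain i where j: "j = Suc i"
    using assms by (cases j) auto
  obtain g where h: "h = Suc (Suc g)"
    using assms by (metis add_2_eq_Suc le_Suc_ex)
  obtain e where ie: "Suc g = i + e"
    using True j h by (metis Suc_le_mono le_Suc_ex)
  obtain K where k: "k = h + K"
    using assms le_Suc_ex by blast
  have "coeff (bernstein_basis k j) (Suc g) = (-1) ^ e * real ((e + K) choose e) / (fact i * fact (e + K))"
    using ie by (simp add: coeff_bernstein_basis j h k)
  also have "\<dots> = (-1) ^ e / (fact i * fact e * fact K)"
    by (simp add: binomial_fact)
  finally have grad: "coeff (bernstein_grad k j) (h - 2) = - real (Suc g) * (-1) ^ e / (fact i * fact e * fact K)"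
    by (simp add: coeff_bernstein_grad h)
  have bvec: "bvec h j = (-1) ^ i * (fact (Suc g) / (fact i * fact e))"
    using True ie by (simp add: bvec_def j h binomial_fact)
  have "odd (g + i + e)"
    using ie by presburger
  then have sign: "(-1::real) ^ e = - ((-1) ^ g * (-1) ^ i)"
    by (auto simp: minus_one_power_iff)
  show ?thesis
    unfolding grad bvec sign by (simp add: h k field_simps)
qed

lemma sum_bernstein_basis:
  assumes "1 \<le> k"
  shows "(\<Sum>r\<in>{1..k}. smult (fact (k - 1)) (bernstein_basis k r)) = 1"
proof -
  obtain n where k: "k = Suc n"
    using assms by (cases k) auto
  have "(\<Sum>r\<in>{1..k}. smult (fact n) (bernstein_basis k r)) =
      (\<Sum>i\<le>n. smult (fact n) (bernstein_basis k (Suc i)))"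
    unfolding k One_nat_def sum.atLeast1_atMost_eq lessThan_Suc_atMost ..
  also have "\<dots> = (\<Sum>i\<le>n. of_nat (n choose i) * [:0, 1:] ^ i * [:1, -1:] ^ (n - i))"
    by (intro sum.cong) (simp_all add: bernstein_basis_def k binomial_fact monom_altdef of_nat_poly)
  also have "\<dots> = ([:0, 1:] + [:1, -1:]) ^ n"
    by (rule binomial_ring[symmetric])
  also have "[:0, 1:] + [:1, -1:] = (1 :: real poly)"
    by (simp add: one_pCons)
  finally show ?thesis
    by (simp add: k)
qed

text \<open>The lowest monomial of \<open>bernstein_basis k r\<close> is \<open>x ^ (r - 1)\<close>, so the basis is
  triangular with respect to monomials.\<close>

lemma bernstein_basis_independent:
  assumes "(\<Sum>r\<in>{1..k}. smult (c r) (bernstein_basis k r)) = 0" and "r \<in> {1..k}"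
  shows "c r = 0"
  using assms(2)
proof (induction r rule: less_induct)
  case (less r)
  have "0 = (\<Sum>s\<in>{1..k}. c s * coeff (bernstein_basis k s) (r - 1))"
    using arg_cong[OF assms(1), of "\<lambda>p. coeff p (r - 1)"] by (simp add: coeff_sum)
  also have "\<dots> = (\<Sum>s\<in>{r}. c s * coeff (bernstein_basis k s) (r - 1))"
  proof (rule sum.mono_neutral_right)
    show "\<forall>s\<in>{1..k} - {r}. c s * coeff (bernstein_basis k s) (r - 1) = 0"
    proof
      fix s assume s: "s \<in> {1..k} - {r}"
      show "c s * coeff (bernstein_basis k s) (r - 1) = 0"
      proof (cases "s < r")
        case True
        with s show ?thesis
          using less.IH by simp
      next
        case False
        with s less.prems have "r - 1 < s - 1"
          by auto
        then show ?thesis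
          by (simp add: coeff_bernstein_basis)
      qed
    qed
  qed (use less.prems in auto)
  finally show ?case
    by (simp add: coeff_bernstein_basis)
qed

lemma bernstein_grad_combination_eq_0_imp_const:
  fixes c :: "nat \<Rightarrow> real"
  assumes "\<And>a. a \<noteq> 0 \<Longrightarrow> a \<noteq> 1 \<Longrightarrow> (\<Sum>r\<in>{1..k}. c r * poly (bernstein_grad k r) a) = 0"
  shows "\<exists>K. \<forall>r\<in>{1..k}. c r = K"
proof (cases "k = 0")
  case False
  define S where "S = (\<Sum>r\<in>{1..k}. smult (c r) (bernstein_basis k r))"
  have "pderiv S = - (\<Sum>r\<in>{1..k}. smult (c r) (bernstein_grad k r))"
    by (simp add: S_def pderiv_smult bernstein_grad_def sum_negf higher_pderiv_sum[of 1, simplified])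
  then have "pderiv S = 0"
    using assms by (intro poly_eq_0_cofinite[of "{0, 1}"]) (auto simp: poly_sum)
  then obtain K where "S = [:K:]"
    using pderiv_iszero by blast
  also have "\<dots> = [:K:] * (\<Sum>r\<in>{1..k}. smult (fact (k - 1)) (bernstein_basis k r))"
    using False sum_bernstein_basis[of k] by simp
  also have "\<dots> = (\<Sum>r\<in>{1..k}. smult (K * fact (k - 1)) (bernstein_basis k r))"
    by (simp add: sum_distrib_left mult.commute)
  finally have "(\<Sum>r\<in>{1..k}. smult (c r - K * fact (k - 1)) (bernstein_basis k r)) = 0"
    by (simp add: S_def smult_diff_left sum_subtractf)
  then have "\<forall>r\<in>{1..k}. c r = K * fact (k - 1)"
    using bernstein_basis_independent[where c = "\<lambda>r. c r - K * fact (k - 1)"] by auto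
  then show ?thesis ..
qed simp

lemma is_kperm_apply:
  "is_kperm k f \<Longrightarrow> r \<in> {1..k} \<Longrightarrow> f r \<in> {1..k}"
  unfolding is_kperm_def by (rule bij_betw_apply)

lemma grad_poly_eq_sum_bernstein_grad:
  assumes "is_kperm k f" "a \<noteq> 0" "a \<noteq> 1" "b \<noteq> 0" "b \<noteq> 1"
  shows "grad_poly k f a b =
    fact k * (\<Sum>r\<in>{1..k}. poly (bernstein_grad k r) a * poly (bernstein_grad k (f r)) b)"
  unfolding grad_poly_def
proof (intro arg_cong[where f = "\<lambda>x. fact k * x"] sum.cong refl)
  fix r assume r: "r \<in> {1..k}"
  with assms(1) have "f r \<in> {1..k}"
    by (rule is_kperm_apply)
  with r show "(real (k - r) / (1 - a) - real (r - 1) / a) *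
      (real (k - f r) / (1 - b) - real (f r - 1) / b) *
      (a ^ (r - 1) * (1 - a) ^ (k - r) * b ^ (f r - 1) * (1 - b) ^ (k - f r)) /
      (fact (r - 1) * fact (k - r) * fact (f r - 1) * fact (k - f r)) =
      poly (bernstein_grad k r) a * poly (bernstein_grad k (f r)) b"
    using assms by (simp add: poly_bernstein_grad mult_ac)
qed

lemma is_kperm_inv_into:
  "is_kperm k f \<Longrightarrow> is_kperm k (inv_into {1..k} f)"
  unfolding is_kperm_def by (rule bij_betw_inv_into)

lemma grad_poly_inv_into_swap:
  assumes f: "is_kperm k f" and "a \<noteq> 0" "a \<noteq> 1" "b \<noteq> 0" "b \<noteq> 1"
  shows "grad_poly k (inv_into {1..k} f) b a = grad_poly k f a b"
proof -
  have bij: "bij_betw f {1..k} {1..k}"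
    using f unfolding is_kperm_def .
  have "grad_poly k (inv_into {1..k} f) b a = fact k *
      (\<Sum>r\<in>{1..k}. poly (bernstein_grad k r) b * poly (bernstein_grad k (inv_into {1..k} f r)) a)"
    using assms is_kperm_inv_into by (simp add: grad_poly_eq_sum_bernstein_grad)
  also have "\<dots> = fact k *
      (\<Sum>s\<in>{1..k}. poly (bernstein_grad k (f s)) b * poly (bernstein_grad k (inv_into {1..k} f (f s))) a)"
    using sum.reindex_bij_betw[OF bij,
        of "\<lambda>r. poly (bernstein_grad k r) b * poly (bernstein_grad k (inv_into {1..k} f r)) a"]
    by simp
  also have "\<dots> = grad_poly k f a b"
    using assms bij by (auto simp: grad_poly_eq_sum_bernstein_grad bij_betw_def mult.commute intro!: sum.cong)
  finally show ?thesis .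
qed

lemma vanishing_grad_poly_inv_into:
  fixes ord :: "nat \<Rightarrow> nat" and p :: "nat \<Rightarrow> nat \<Rightarrow> nat" and t :: "nat \<Rightarrow> real"
  assumes perms: "\<forall>i\<in>I. is_kperm (ord i) (p i)"
    and vanish: "\<forall>a b :: real. a \<noteq> 0 \<and> a \<noteq> 1 \<and> b \<noteq> 0 \<and> b \<noteq> 1 \<longrightarrow>
                   (\<Sum>i\<in>I. t i * grad_poly (ord i) (p i) a b) = 0"
  shows "\<forall>a b :: real. a \<noteq> 0 \<and> a \<noteq> 1 \<and> b \<noteq> 0 \<and> b \<noteq> 1 \<longrightarrow>
           (\<Sum>i\<in>I. t i * grad_poly (ord i) (inv_into {1..ord i} (p i)) a b) = 0"
proof (intro allI impI)
  fix a b :: real assume ab: "a \<noteq> 0 \<and> a \<noteq> 1 \<and> b \<noteq> 0 \<and> b \<noteq> 1"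
  have "(\<Sum>i\<in>I. t i * grad_poly (ord i) (inv_into {1..ord i} (p i)) a b) =
      (\<Sum>i\<in>I. t i * grad_poly (ord i) (p i) b a)"
  proof (intro sum.cong refl)
    fix i assume "i \<in> I"
    then show "t i * grad_poly (ord i) (inv_into {1..ord i} (p i)) a b = t i * grad_poly (ord i) (p i) b a"
      using grad_poly_inv_into_swap[OF bspec[OF perms]] ab by simp
  qed
  also have "\<dots> = 0"
    using vanish ab by blast
  finally show "(\<Sum>i\<in>I. t i * grad_poly (ord i) (inv_into {1..ord i} (p i)) a b) = 0" .
qed

definition grad_poly_slice :: "nat \<Rightarrow> (nat \<Rightarrow> nat) \<Rightarrow> real \<Rightarrow> real poly" where
  "grad_poly_slice k f a =
     smult (fact k) (\<Sum>r\<in>{1..k}. smult (poly (bernstein_grad k r) a) (bernstein_grad k (f r)))"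

lemma poly_grad_poly_slice:
  assumes "is_kperm k f" "a \<noteq> 0" "a \<noteq> 1" "b \<noteq> 0" "b \<noteq> 1"
  shows "poly (grad_poly_slice k f a) b = grad_poly k f a b"
  using assms by (simp add: grad_poly_slice_def grad_poly_eq_sum_bernstein_grad poly_sum)

lemma coeff_grad_poly_slice_eq_0:
  assumes "is_kperm k f" "2 \<le> h" "k < h"
  shows "coeff (grad_poly_slice k f a) (h - 2) = 0"
  using assms is_kperm_apply[OF assms(1)]
  by (simp add: grad_poly_slice_def coeff_sum coeff_bernstein_grad_eq_0)

lemma coeff_grad_poly_slice_eq_bvec:
  assumes "is_kperm k f" "2 \<le> h" "h \<le> k"
  shows "coeff (grad_poly_slice k f a) (h - 2) = fact k * ((-1) ^ h / (fact (h - 2) * fact (k - h))) *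
    (\<Sum>r\<in>{1..k}. bvec h (f r) * poly (bernstein_grad k r) a)"
  using assms is_kperm_apply[OF assms(1)]
  by (simp add: grad_poly_slice_def coeff_sum coeff_bernstein_grad_eq_bvec
      sum_distrib_left sum_divide_distrib mult_ac)

lemma sum_bvec_eq_0:
  assumes "2 \<le> h" "h \<le> k"
  shows "(\<Sum>j\<in>{1..k}. bvec h j) = 0"
proof -
  have "(\<Sum>j\<in>{1..k}. bvec h j) = (\<Sum>j\<in>{1..h}. bvec h j)"
    using assms by (intro sum.mono_neutral_right) (auto simp: bvec_def)
  also have "\<dots> = (\<Sum>i<h. bvec h (Suc i))"
    unfolding One_nat_def sum.atLeast1_atMost_eq ..
  also have "\<dots> = (\<Sum>i\<le>h - 1. (-1) ^ i * of_nat ((h - 1) choose i))"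
    using assms by (intro sum.cong) (auto simp: bvec_def)
  also have "\<dots> = 0"
    using assms by (intro choose_alternating_sum) auto
  finally show ?thesis .
qed

lemma cover_mult_vec:
  assumes "\<forall>l\<in>I. p l i \<in> {1..k}"
  shows "(\<Sum>j\<in>{1..k}. cover I t p i j * x j) = (\<Sum>l\<in>I. t l * x (p l i))"
proof -
  have "(\<Sum>j\<in>{1..k}. cover I t p i j * x j) = (\<Sum>l\<in>I. t l * (\<Sum>j\<in>{1..k}. perm_mat (p l) i j * x j))"
    unfolding cover_def sum_distrib_right sum_distrib_left by (subst sum.swap) (simp add: mult.assoc)
  also have "\<dots> = (\<Sum>l\<in>I. t l * x (p l i))"
  proof (intro sum.cong refl)
    fix l assume "l \<in> I"
    have "(\<Sum>j\<in>{1..k}. perm_mat (p l) i j * x j) = (\<Sum>j\<in>{1..k}. if p l i = j then x j else 0)"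
      by (intro sum.cong) (simp_all add: perm_mat_def)
    with \<open>l \<in> I\<close> assms show "t l * (\<Sum>j\<in>{1..k}. perm_mat (p l) i j * x j) = t l * x (p l i)"
      by simp
  qed
  finally show ?thesis .
qed

lemma cover_inv_into_transpose:
  assumes "\<forall>l\<in>I. bij_betw (p l) {1..k} {1..k}" "i \<in> {1..k}" "j \<in> {1..k}"
  shows "cover I t (\<lambda>l. inv_into {1..k} (p l)) j i = cover I t p i j"
  unfolding cover_def perm_mat_def
proof (intro sum.cong refl)
  fix l assume "l \<in> I"
  then have "inv_into {1..k} (p l) j = i \<longleftrightarrow> p l i = j"
    using assms by (metis bij_betw_def bij_betw_inv_into_right inv_into_f_f)
  then show "t l * (if inv_into {1..k} (p l) j = i then 1 else 0) = t l * (if p l i = j then 1 else 0)"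
    by simp
qed

lemma sum_bvec_perm_bernstein_grad_eq_0:
  fixes ord :: "nat \<Rightarrow> nat" and p :: "nat \<Rightarrow> nat \<Rightarrow> nat" and t :: "nat \<Rightarrow> real"
  assumes perms: "\<forall>i\<in>{1..m}. is_kperm (ord i) (p i)"
    and vanish: "\<forall>a b :: real. a \<noteq> 0 \<and> a \<noteq> 1 \<and> b \<noteq> 0 \<and> b \<noteq> 1 \<longrightarrow>
                   (\<Sum>i\<in>{1..m}. t i * grad_poly (ord i) (p i) a b) = 0"
    and n_range: "n \<le> m"
    and top: "\<forall>i\<in>{1..n}. ord i = k"
    and h_range: "2 \<le> h" "h \<le> k"
    and rest: "\<forall>i\<in>{n+1..m}. ord i \<le> h - 1"
    and a: "a \<noteq> 0" "a \<noteq> 1"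
  shows "(\<Sum>r\<in>{1..k}. (\<Sum>l\<in>{1..n}. t l * bvec h (p l r)) * poly (bernstein_grad k r) a) = 0"
proof -
  define P where "P = (\<Sum>i\<in>{1..m}. smult (t i) (grad_poly_slice (ord i) (p i) a))"
  define \<kappa> :: real where "\<kappa> = fact k * ((-1) ^ h / (fact (h - 2) * fact (k - h)))"
  have "P = 0"
  proof (rule poly_eq_0_cofinite[of "{0, 1}"])
    fix b :: real assume "b \<notin> {0, 1}"
    then have "poly P b = (\<Sum>i\<in>{1..m}. t i * grad_poly (ord i) (p i) a b)"
      using perms a by (simp add: P_def poly_sum poly_grad_poly_slice)
    with vanish a \<open>b \<notin> {0, 1}\<close> show "poly P b = 0"
      by simp
  qed simp
  then have "0 = coeff P (h - 2)"
    by simp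
  also have "\<dots> = (\<Sum>i\<in>{1..m}. t i * coeff (grad_poly_slice (ord i) (p i) a) (h - 2))"
    by (simp add: P_def coeff_sum)
  also have "\<dots> = (\<Sum>i\<in>{1..n}. t i * coeff (grad_poly_slice (ord i) (p i) a) (h - 2))"
  proof (rule sum.mono_neutral_right)
    show "\<forall>i\<in>{1..m} - {1..n}. t i * coeff (grad_poly_slice (ord i) (p i) a) (h - 2) = 0"
    proof
      fix i assume i: "i \<in> {1..m} - {1..n}"
      then have "i \<in> {1..m}" and "i \<in> {n+1..m}"
        by auto
      then have "is_kperm (ord i) (p i)" and "ord i < h"
        using perms rest h_range by fastforce+
      then show "t i * coeff (grad_poly_slice (ord i) (p i) a) (h - 2) = 0"
        using h_range by (simp add: coeff_grad_poly_slice_eq_0)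
    qed
  qed (use n_range in auto)
  also have "\<dots> = (\<Sum>l\<in>{1..n}. t l * (\<kappa> * (\<Sum>r\<in>{1..k}. bvec h (p l r) * poly (bernstein_grad k r) a)))"
  proof (intro sum.cong refl)
    fix l assume l: "l \<in> {1..n}"
    then have "l \<in> {1..m}"
      using n_range by auto
    then have "is_kperm k (p l)"
      using perms top l by fastforce
    then show "t l * coeff (grad_poly_slice (ord l) (p l) a) (h - 2) =
        t l * (\<kappa> * (\<Sum>r\<in>{1..k}. bvec h (p l r) * poly (bernstein_grad k r) a))"
      using top l h_range by (simp add: \<kappa>_def coeff_grad_poly_slice_eq_bvec)
  qed
  also have "\<dots> = \<kappa> * (\<Sum>r\<in>{1..k}. (\<Sum>l\<in>{1..n}. t l * bvec h (p l r)) * poly (bernstein_grad k r) a)"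
    unfolding sum_distrib_left sum_distrib_right by (subst sum.swap) (simp add: mult_ac)
  finally show ?thesis
    by (simp add: \<kappa>_def)
qed

lemma cover_mult_bvec_eq_0:
  fixes ord :: "nat \<Rightarrow> nat" and p :: "nat \<Rightarrow> nat \<Rightarrow> nat" and t :: "nat \<Rightarrow> real"
  assumes perms: "\<forall>i\<in>{1..m}. is_kperm (ord i) (p i)"
    and vanish: "\<forall>a b :: real. a \<noteq> 0 \<and> a \<noteq> 1 \<and> b \<noteq> 0 \<and> b \<noteq> 1 \<longrightarrow>
                   (\<Sum>i\<in>{1..m}. t i * grad_poly (ord i) (p i) a b) = 0"
    and n_range: "n \<le> m"
    and top: "\<forall>i\<in>{1..n}. ord i = k"
    and h_range: "2 \<le> h" "h \<le> k"
    and rest: "\<forall>i\<in>{n+1..m}. ord i \<le> h - 1"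
    and i: "i \<in> {1..k}"
  shows "(\<Sum>j\<in>{1..k}. cover {1..n} t p i j * bvec h j) = 0"
proof -
  define v where "v r = (\<Sum>l\<in>{1..n}. t l * bvec h (p l r))" for r
  have bij: "bij_betw (p l) {1..k} {1..k}" if "l \<in> {1..n}" for l
    using perms top n_range that unfolding is_kperm_def by fastforce
  have "(\<Sum>r\<in>{1..k}. v r * poly (bernstein_grad k r) a) = 0" if "a \<noteq> 0" "a \<noteq> 1" for a
    unfolding v_def by (rule sum_bvec_perm_bernstein_grad_eq_0[OF assms(1-7) that])
  then obtain K where K: "\<forall>r\<in>{1..k}. v r = K"
    using bernstein_grad_combination_eq_0_imp_const by blast
  have "(\<Sum>r\<in>{1..k}. v r) = (\<Sum>l\<in>{1..n}. t l * (\<Sum>r\<in>{1..k}. bvec h (p l r)))"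
    unfolding v_def sum_distrib_left by (rule sum.swap)
  also have "\<dots> = (\<Sum>l\<in>{1..n}. t l * (\<Sum>j\<in>{1..k}. bvec h j))"
  proof (intro sum.cong refl)
    fix l assume "l \<in> {1..n}"
    then show "t l * (\<Sum>r\<in>{1..k}. bvec h (p l r)) = t l * (\<Sum>j\<in>{1..k}. bvec h j)"
      using sum.reindex_bij_betw[OF bij, of l "bvec h"] by simp
  qed
  also have "\<dots> = 0"
    using sum_bvec_eq_0[OF h_range] by simp
  finally have "real k * K = 0"
    using K by simp
  with h_range have "v i = 0"
    using K i by simp
  moreover have "(\<Sum>j\<in>{1..k}. cover {1..n} t p i j * bvec h j) = v i"
    unfolding v_def using bij i by (intro cover_mult_vec) (meson bij_betw_apply)
  ultimately show ?thesis
    by simp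
qed

lemma bvec_mult_cover_eq_0:
  fixes ord :: "nat \<Rightarrow> nat" and p :: "nat \<Rightarrow> nat \<Rightarrow> nat" and t :: "nat \<Rightarrow> real"
  assumes perms: "\<forall>i\<in>{1..m}. is_kperm (ord i) (p i)"
    and vanish: "\<forall>a b :: real. a \<noteq> 0 \<and> a \<noteq> 1 \<and> b \<noteq> 0 \<and> b \<noteq> 1 \<longrightarrow>
                   (\<Sum>i\<in>{1..m}. t i * grad_poly (ord i) (p i) a b) = 0"
    and n_range: "n \<le> m"
    and top: "\<forall>i\<in>{1..n}. ord i = k"
    and h_range: "2 \<le> h" "h \<le> k"
    and rest: "\<forall>i\<in>{n+1..m}. ord i \<le> h - 1"
    and j: "j \<in> {1..k}"
  shows "(\<Sum>i\<in>{1..k}. bvec h i * cover {1..n} t p i j) = 0"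
proof -
  define q where "q i = inv_into {1..ord i} (p i)" for i
  have perms_q: "\<forall>i\<in>{1..m}. is_kperm (ord i) (q i)"
    using perms is_kperm_inv_into unfolding q_def by blast
  have bij: "\<forall>l\<in>{1..n}. bij_betw (p l) {1..k} {1..k}"
    using perms top n_range unfolding is_kperm_def by fastforce
  have "cover {1..n} t p i j = cover {1..n} t q j i" if "i \<in> {1..k}" for i
  proof -
    have "cover {1..n} t p i j = cover {1..n} t (\<lambda>l. inv_into {1..k} (p l)) j i"
      using cover_inv_into_transpose[OF bij that j] ..
    also have "\<dots> = cover {1..n} t q j i"
      using top unfolding cover_def q_def by (intro sum.cong) auto
    finally show ?thesis .
  qed
  then have "(\<Sum>i\<in>{1..k}. bvec h i * cover {1..n} t p i j) =
      (\<Sum>i\<in>{1..k}. cover {1..n} t q j i * bvec h i)"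
    by (intro sum.cong) auto
  also have "\<dots> = 0"
    using vanishing_grad_poly_inv_into[OF perms vanish] unfolding q_def[symmetric]
    by (rule cover_mult_bvec_eq_0[OF perms_q _ n_range top h_range rest j])
  finally show ?thesis .
qed

theorem lemma9:
  fixes m n h k :: nat
    and ord :: "nat \<Rightarrow> nat"
    and p :: "nat \<Rightarrow> nat \<Rightarrow> nat"
    and t :: "nat \<Rightarrow> real"
  assumes m_pos: "1 \<le> m"
    and perms: "\<forall>i\<in>{1..m}. is_kperm (ord i) (p i)"
    and vanish: "\<forall>a b :: real. a \<noteq> 0 \<and> a \<noteq> 1 \<and> b \<noteq> 0 \<and> b \<noteq> 1 \<longrightarrow>
                   (\<Sum>i\<in>{1..m}. t i * grad_poly (ord i) (p i) a b) = 0"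
    and k_def: "k = Max (ord ` {1..m})"
    and n_range: "n \<le> m"
    and top: "\<forall>i\<in>{1..m}. (ord i = k \<longleftrightarrow> i \<le> n)"
    and h_range: "2 \<le> h" "h \<le> k"
    and rest: "\<forall>i\<in>{n+1..m}. ord i \<le> h - 1"
  shows "(\<forall>i\<in>{1..k}. (\<Sum>j\<in>{1..k}. cover {1..n} t p i j * bvec h j) = 0) \<and>
         (\<forall>j\<in>{1..k}. (\<Sum>i\<in>{1..k}. bvec h i * cover {1..n} t p i j) = 0)"
proof -
  have top_order: "\<forall>i\<in>{1..n}. ord i = k"
    using top n_range by auto
  show ?thesis
    using cover_mult_bvec_eq_0[OF perms vanish n_range top_order h_range rest]
      bvec_mult_cover_eq_0[OF perms vanish n_range top_order h_range rest]
    by blast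
qed

end
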